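(* Let $\chi:\mathcal H\to\mathcal H_L^\chi\otimes\mathcal H_R^\chi$ be a splitting map. The set $\mathrm{cons}(\chi)$ of $\chi$-consistent operators is a Von Neumann algebra included in $\mathcal L(\mathcal H_L^\chi)$, and it is the largest Von Neumann algebra $\mathcal A\subseteq\mathcal L(\mathcal H_L^\chi)$ such that the restriction of $\sigma^\chi$ to $\mathcal A$ is a $*$-algebra homomorphism, where $\sigma^\chi:\mathcal L(\mathcal H_L^\chi)\to\mathcal L(\mathcal H)$, $\sigma^\chi(B)=\chi^\dagger(B\otimes\mathbb 1_{\mathcal H_R^\chi})\chi$.
   Context: All Hilbert spaces are finite-dimensional and complex. A Von Neumann algebra on a Hilbert space $\mathcal K$ is a $*$-subalgebra of $\mathcal L(\mathcal K)$ closed under adjoint and containing $\mathbb 1_{\mathcal K}$. A splitting map on $\mathcal H$ is an isometry $\chi:\mathcal H\to\mathcal H_L^\chi\otimes\mathcal H_R^\chi$; $\pi^\chi=\chi\chi^\dagger$. $B\in\mathcal L(\mathcal H_L^\chi)$ is $\chi$-consistent if $\pi^\chi(B\otimes\mathbb 1)=(B\otimes\mathbb 1)\pi^\chi$. *)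

theory Defs
  imports "Jordan_Normal_Form.Schur_Decomposition"
begin

text \<open>Finite-dimensional Hilbert spaces are modelled as C^n; operators as complex matrices.
  The tensor product H_L (x) H_R = C^dL (x) C^dR is C^(dL*dR) with the Kronecker product
  of matrices.\<close>

definition kron :: "complex mat \<Rightarrow> complex mat \<Rightarrow> complex mat" where
  "kron A B = mat (dim_row A * dim_row B) (dim_col A * dim_col B)
     (\<lambda>(i, j). A $$ (i div dim_row B, j div dim_col B) * B $$ (i mod dim_row B, j mod dim_col B))"

definition splitting_map :: "complex mat \<Rightarrow> nat \<Rightarrow> nat \<Rightarrow> nat \<Rightarrow> bool" where
  "splitting_map chi n dL dR \<longleftrightarrow> chi \<in> carrier_mat (dL * dR) n \<and> mat_adjoint chi * chi = 1\<^sub>m n"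

definition proj_split :: "complex mat \<Rightarrow> complex mat" where
  "proj_split chi = chi * mat_adjoint chi"

definition cons :: "complex mat \<Rightarrow> nat \<Rightarrow> nat \<Rightarrow> complex mat set" where
  "cons chi dL dR = {B \<in> carrier_mat dL dL.
      proj_split chi * kron B (1\<^sub>m dR) = kron B (1\<^sub>m dR) * proj_split chi}"

definition sigma :: "complex mat \<Rightarrow> nat \<Rightarrow> complex mat \<Rightarrow> complex mat" where
  "sigma chi dR B = mat_adjoint chi * kron B (1\<^sub>m dR) * chi"

text \<open>Von Neumann algebra on C^d (finite dim): unital *-subalgebra of L(C^d).\<close>
definition von_neumann_algebra :: "nat \<Rightarrow> complex mat set \<Rightarrow> bool" where
  "von_neumann_algebra d A \<longleftrightarrow> A \<subseteq> carrier_mat d d \<and> 1\<^sub>m d \<in> A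
     \<and> (\<forall>B\<in>A. \<forall>C\<in>A. B + C \<in> A \<and> B * C \<in> A)
     \<and> (\<forall>c. \<forall>B\<in>A. c \<cdot>\<^sub>m B \<in> A)
     \<and> (\<forall>B\<in>A. mat_adjoint B \<in> A)"

definition star_hom_on :: "complex mat set \<Rightarrow> (complex mat \<Rightarrow> complex mat) \<Rightarrow> bool" where
  "star_hom_on A f \<longleftrightarrow>
     (\<forall>B\<in>A. \<forall>C\<in>A. f (B + C) = f B + f C \<and> f (B * C) = f B * f C)
     \<and> (\<forall>c. \<forall>B\<in>A. f (c \<cdot>\<^sub>m B) = c \<cdot>\<^sub>m f B)
     \<and> (\<forall>B\<in>A. f (mat_adjoint B) = mat_adjoint (f B))"

end

theory Submission
  imports Defs
begin

text \<open>Write \<open>K B = B \<otimes> 1\<close> and \<open>P = \<chi> \<chi>\<^sup>\<dagger>\<close>, the projection onto the range of \<open>\<chi>\<close>, so that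
  \<open>cons(\<chi>)\<close> consists of the \<open>B\<close> for which \<open>K B\<close> commutes with \<open>P\<close>, and \<open>\<sigma>(B) = \<chi>\<^sup>\<dagger> K(B) \<chi>\<close>.
  Since \<open>K\<close> is a unital \<open>*\<close>-homomorphism and \<open>P\<close> is self-adjoint, \<open>cons(\<chi>)\<close> is the preimage
  under \<open>K\<close> of the commutant of \<open>P\<close>, hence a \<open>*\<close>-algebra, and on it \<open>\<sigma>\<close> is multiplicative
  because \<open>\<chi>\<^sup>\<dagger> K(B) P K(C) \<chi> = \<chi>\<^sup>\<dagger> K(B) K(C) \<chi>\<close>.
  Conversely, if \<open>\<sigma>(B\<^sup>\<dagger>B) = \<sigma>(B)\<^sup>\<dagger>\<sigma>(B)\<close>, then \<open>Y = K(B) \<chi>\<close> satisfies \<open>Y\<^sup>\<dagger>Y = Y\<^sup>\<dagger>PY\<close>, i.e.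
  \<open>((1 - P) Y)\<^sup>\<dagger>((1 - P) Y) = 0\<close>, so \<open>K(B) P = P K(B) P\<close>. The same for \<open>B\<^sup>\<dagger>\<close>, which lies
  in every \<open>*\<close>-algebra containing \<open>B\<close>, gives after taking adjoints \<open>P K(B) = P K(B) P\<close>.\<close>

text \<open>Unlike \<open>assoc_mult_mat\<close>, the premises mention no dimension that is absent from the
  conclusion, so the simplifier can discharge them for compound factors.\<close>

lemma assoc_mult_mat_dim [simp]:
  "dim_col A = dim_row B \<Longrightarrow> dim_col B = dim_row C \<Longrightarrow> A * B * C = A * (B * C)"
  by (rule assoc_mult_mat) (auto intro: carrier_matI)

lemma mat_adjoint_dim [simp]:
  "dim_row (mat_adjoint A) = dim_col A" "dim_col (mat_adjoint A) = dim_row A"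
  unfolding mat_adjoint_def by simp_all

lemma mat_adjoint_carrier [simp]: "mat_adjoint A \<in> carrier_mat m n \<longleftrightarrow> A \<in> carrier_mat n m"
  unfolding carrier_mat_def by auto

lemma index_mat_adjoint [simp]:
  "i < dim_col A \<Longrightarrow> j < dim_row A \<Longrightarrow> mat_adjoint A $$ (i, j) = conjugate (A $$ (j, i))"
  unfolding mat_adjoint_def by (simp add: mat_of_rows_index)

lemma mat_adjoint_adjoint [simp]: "mat_adjoint (mat_adjoint A) = A"
  by (rule eq_matI) auto

lemma mat_adjoint_mult:
  "dim_col A = dim_row B \<Longrightarrow> mat_adjoint (A * B) = mat_adjoint B * mat_adjoint A"
  by (intro eq_matI) (auto simp: scalar_prod_def sum_conjugate conjugate_dist_mul mult.commute)

lemma conjugate_diff: "conjugate (a - b) = conjugate a - conjugate (b :: 'a :: conjugatable_ring)"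
  by (metis diff_conv_add_uminus conjugate_dist_add conjugate_neg)

lemma mat_adjoint_minus:
  "dim_row A = dim_row B \<Longrightarrow> dim_col A = dim_col B \<Longrightarrow>
    mat_adjoint (A - B) = mat_adjoint A - mat_adjoint B"
  by (intro eq_matI) (auto simp: conjugate_diff)

lemma conjugate_one [simp]: "conjugate (1 :: 'a :: conjugatable_field) = 1"
proof -
  have "conjugate (1 :: 'a) * conjugate 1 = conjugate 1 * 1"
    by (simp flip: conjugate_dist_mul)
  then show ?thesis
    by (simp only: mult_cancel_left conjugate_zero_iff one_neq_zero simp_thms)
qed

lemma mat_adjoint_one [simp]: "mat_adjoint (1\<^sub>m n :: 'a :: conjugatable_field mat) = 1\<^sub>m n"
  by (intro eq_matI) auto

lemma mat_adjoint_mult_self_eq_0D: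
  fixes A :: "'a :: conjugatable_ordered_field mat"
  assumes A: "A \<in> carrier_mat m n" and AA: "mat_adjoint A * A = 0\<^sub>m n n"
  shows "A = 0\<^sub>m m n"
proof (rule eq_matI)
  fix i j assume "i < dim_row (0\<^sub>m m n)" "j < dim_col (0\<^sub>m m n)"
  then have i: "i < m" and j: "j < n" by simp_all
  have "col A j \<bullet>c col A j = (mat_adjoint A * A) $$ (j, j)"
    using A j by (simp add: mat_adjoint_def conjugate_vec_sprod_comm[of _ m])
  moreover have "col A j \<in> carrier_vec m"
    using A by auto
  ultimately have "col A j = 0\<^sub>v m"
    using AA j by simp
  then show "A $$ (i, j) = 0\<^sub>m m n $$ (i, j)"
    using A i j by (metis carrier_matD index_col index_zero_mat(1) index_zero_vec(1))
qed (use A in auto)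

lemma dim_kron [simp]:
  "dim_row (kron A B) = dim_row A * dim_row B" "dim_col (kron A B) = dim_col A * dim_col B"
  unfolding kron_def by simp_all

lemma index_kron:
  assumes "i < dim_row A * dim_row B" "j < dim_col A * dim_col B"
  shows "kron A B $$ (i, j) =
    A $$ (i div dim_row B, j div dim_col B) * B $$ (i mod dim_row B, j mod dim_col B)"
  using assms unfolding kron_def by simp

lemma sum_lessThan_mult_nat:
  "(\<Sum>l<m * n. g l) = (\<Sum>a<m. \<Sum>b<n. g (a * n + b :: nat))"
proof -
  have "(\<Sum>l<m * n. g l) = (\<Sum>a<m. sum g {a * n..<a * n + n})"
    by (rule sum.nat_group[symmetric])
  also have "\<dots> = (\<Sum>a<m. \<Sum>b<n. g (a * n + b))"
    by (rule sum.cong[OF refl], subst sum.atLeastLessThan_shift_0) (simp add: atLeast0LessThan comp_def)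
  finally show ?thesis .
qed

lemma div_mod_less_mult:
  fixes i m n :: nat
  assumes "i < m * n"
  shows "i div n < m" "i mod n < n"
proof -
  show "i div n < m"
    using assms by (rule less_mult_imp_div_less)
  from assms have "0 < n"
    by (metis mult_0_right not_less_zero gr0I)
  then show "i mod n < n"
    by simp
qed

lemma kron_mult:
  assumes A: "A \<in> carrier_mat m k" and C: "C \<in> carrier_mat k p"
    and B: "B \<in> carrier_mat m' k'" and D: "D \<in> carrier_mat k' p'"
  shows "kron A B * kron C D = kron (A * C) (B * D)"
proof (rule eq_matI)
  fix i j assume "i < dim_row (kron (A * C) (B * D))" "j < dim_col (kron (A * C) (B * D))"
  then have i: "i < m * m'" and j: "j < p * p'"
    using A B C D by simp_all
  have "(kron A B * kron C D) $$ (i, j) = (\<Sum>l<k * k'. kron A B $$ (i, l) * kron C D $$ (l, j))"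
    using A B C D i j by (simp add: scalar_prod_def atLeast0LessThan)
  also have "\<dots> = (\<Sum>a<k. \<Sum>b<k'. (A $$ (i div m', a) * C $$ (a, j div p')) *
                                 (B $$ (i mod m', b) * D $$ (b, j mod p')))"
    unfolding sum_lessThan_mult_nat
  proof (intro sum.cong refl)
    fix a b assume "a \<in> {..<k}" "b \<in> {..<k'}"
    then have "a * k' + b < k * k'"
      using order.strict_trans2[OF _ mult_le_mono1[of "Suc a" k k']] by simp
    moreover have "(a * k' + b) div k' = a" "(a * k' + b) mod k' = b"
      using \<open>b \<in> {..<k'}\<close> by simp_all
    ultimately show "kron A B $$ (i, a * k' + b) * kron C D $$ (a * k' + b, j) =
        (A $$ (i div m', a) * C $$ (a, j div p')) * (B $$ (i mod m', b) * D $$ (b, j mod p'))"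
      using A B C D i j by (simp add: index_kron ac_simps)
  qed
  also have "\<dots> = (A * C) $$ (i div m', j div p') * (B * D) $$ (i mod m', j mod p')"
    using A B C D div_mod_less_mult[OF i] div_mod_less_mult[OF j]
    by (simp add: sum_product scalar_prod_def atLeast0LessThan)
  also have "\<dots> = kron (A * C) (B * D) $$ (i, j)"
    using A B C D i j by (simp add: index_kron)
  finally show "(kron A B * kron C D) $$ (i, j) = kron (A * C) (B * D) $$ (i, j)" .
qed (use A B C D in simp_all)

lemma kron_add_left:
  assumes "A \<in> carrier_mat m n" "A' \<in> carrier_mat m n"
  shows "kron (A + A') B = kron A B + kron A' B"
  using assms by (intro eq_matI) (auto simp: index_kron div_mod_less_mult algebra_simps)

lemma kron_smult_left: "kron (c \<cdot>\<^sub>m A) B = c \<cdot>\<^sub>m kron A B"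
  by (intro eq_matI) (auto simp: index_kron div_mod_less_mult)

lemma mat_adjoint_kron: "mat_adjoint (kron A B) = kron (mat_adjoint A) (mat_adjoint B)"
  by (intro eq_matI) (auto simp: index_kron div_mod_less_mult conjugate_dist_mul)

lemma kron_one: "kron (1\<^sub>m m) (1\<^sub>m n) = (1\<^sub>m (m * n) :: complex mat)"
proof (intro eq_matI)
  fix i j assume "i < dim_row (1\<^sub>m (m * n) :: complex mat)" "j < dim_col (1\<^sub>m (m * n) :: complex mat)"
  then have i: "i < m * n" and j: "j < m * n" by simp_all
  have "i = j \<longleftrightarrow> i div n = j div n \<and> i mod n = j mod n"
    by (metis div_mult_mod_eq)
  then show "kron (1\<^sub>m m) (1\<^sub>m n) $$ (i, j) = (1\<^sub>m (m * n) :: complex mat) $$ (i, j)"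
    using i j by (simp add: index_kron div_mod_less_mult)
qed simp_all

lemma star_hom_on_kron_one: "star_hom_on (carrier_mat m m) (\<lambda>B. kron B (1\<^sub>m n))"
proof (unfold star_hom_on_def, intro conjI ballI allI)
  fix B C :: "complex mat" assume B: "B \<in> carrier_mat m m" and C: "C \<in> carrier_mat m m"
  show "kron (B + C) (1\<^sub>m n) = kron B (1\<^sub>m n) + kron C (1\<^sub>m n)"
    using B C by (rule kron_add_left)
  show "kron (B * C) (1\<^sub>m n) = kron B (1\<^sub>m n) * kron C (1\<^sub>m n)"
    using kron_mult[OF B C one_carrier_mat one_carrier_mat, of n] by simp
qed (simp_all add: kron_smult_left mat_adjoint_kron)

lemma star_hom_on_subset: "star_hom_on B f \<Longrightarrow> A \<subseteq> B \<Longrightarrow> star_hom_on A f"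
  unfolding star_hom_on_def by blast

lemma von_neumann_algebra_commutant_preimage:
  assumes hom: "star_hom_on (carrier_mat d d) f" and unital: "f (1\<^sub>m d) = 1\<^sub>m N"
    and f_carrier: "\<And>B. B \<in> carrier_mat d d \<Longrightarrow> f B \<in> carrier_mat N N"
    and P: "P \<in> carrier_mat N N" and P_adjoint: "mat_adjoint P = P"
  shows "von_neumann_algebra d {B \<in> carrier_mat d d. P * f B = f B * P}"
proof -
  have add: "f (B + C) = f B + f C" and mult: "f (B * C) = f B * f C"
    and smult: "f (c \<cdot>\<^sub>m B) = c \<cdot>\<^sub>m f B" and adjoint: "f (mat_adjoint B) = mat_adjoint (f B)"
    if "B \<in> carrier_mat d d" "C \<in> carrier_mat d d" for B C c
    using hom that unfolding star_hom_on_def by blast+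
  have "P * f (B + C) = f (B + C) * P \<and> P * f (B * C) = f (B * C) * P"
    if B: "B \<in> carrier_mat d d" "P * f B = f B * P" and C: "C \<in> carrier_mat d d" "P * f C = f C * P"
    for B C
  proof -
    have fB: "f B \<in> carrier_mat N N" and fC: "f C \<in> carrier_mat N N"
      using B C f_carrier by blast+
    have "P * (f B * f C) = P * f B * f C"
      using P fB fC by simp
    also have "\<dots> = f B * (P * f C)"
      using B fB fC P by simp
    also have "\<dots> = f B * f C * P"
      using C fB fC P by simp
    finally show ?thesis
      using B C fB fC P by (simp add: add mult add_mult_distrib_mat mult_add_distrib_mat)
  qed
  moreover have "P * f (c \<cdot>\<^sub>m B) = f (c \<cdot>\<^sub>m B) * P"
    if "B \<in> carrier_mat d d" "P * f B = f B * P" for B c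
    using that f_carrier[of B] P by (simp add: smult mult_smult_distrib mult_smult_assoc_mat)
  moreover have "P * f (mat_adjoint B) = f (mat_adjoint B) * P"
    if B: "B \<in> carrier_mat d d" "P * f B = f B * P" for B
  proof -
    have fB: "f B \<in> carrier_mat N N"
      using B f_carrier by blast
    have "P * mat_adjoint (f B) = mat_adjoint (f B * P)"
      using fB P by (simp add: mat_adjoint_mult P_adjoint)
    also have "\<dots> = mat_adjoint (P * f B)"
      using B by simp
    also have "\<dots> = mat_adjoint (f B) * P"
      using fB P by (simp add: mat_adjoint_mult P_adjoint)
    finally show ?thesis
      using B by (simp add: adjoint)
  qed
  ultimately show ?thesis
    unfolding von_neumann_algebra_def using P by (auto simp: unital)
qed

lemma isometry_range_projection:
  assumes V: "V \<in> carrier_mat N n" and iso: "mat_adjoint V * V = 1\<^sub>m n"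
  shows "mat_adjoint (V * mat_adjoint V) = V * mat_adjoint V"
    and "V * mat_adjoint V * (V * mat_adjoint V) = V * mat_adjoint V"
proof -
  show "mat_adjoint (V * mat_adjoint V) = V * mat_adjoint V"
    using V by (simp add: mat_adjoint_mult)
  have "V * mat_adjoint V * (V * mat_adjoint V) = V * (mat_adjoint V * V) * mat_adjoint V"
    using V by simp
  then show "V * mat_adjoint V * (V * mat_adjoint V) = V * mat_adjoint V"
    using V by (simp add: iso)
qed

lemma star_hom_on_compression:
  assumes hom: "star_hom_on A f" and f_carrier: "\<And>B. B \<in> A \<Longrightarrow> f B \<in> carrier_mat N N"
    and V: "V \<in> carrier_mat N n" and iso: "mat_adjoint V * V = 1\<^sub>m n"
    and commute: "\<And>B. B \<in> A \<Longrightarrow> V * mat_adjoint V * f B = f B * (V * mat_adjoint V)"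
  shows "star_hom_on A (\<lambda>B. mat_adjoint V * f B * V)"
proof (unfold star_hom_on_def, intro conjI ballI allI)
  fix B C assume B: "B \<in> A" and C: "C \<in> A"
  have fB: "f B \<in> carrier_mat N N" and fC: "f C \<in> carrier_mat N N"
    using B C f_carrier by blast+
  have "mat_adjoint V * f B * V * (mat_adjoint V * f C * V) = mat_adjoint V * (f B * (V * mat_adjoint V)) * f C * V"
    using V fB fC by simp
  also have "\<dots> = (mat_adjoint V * V) * mat_adjoint V * f B * f C * V"
    using V fB fC by (simp flip: commute[OF B])
  finally show "mat_adjoint V * f (B * C) * V = mat_adjoint V * f B * V * (mat_adjoint V * f C * V)"
    using hom B C V fB fC unfolding star_hom_on_def by (simp add: iso)
  show "mat_adjoint V * f (B + C) * V = mat_adjoint V * f B * V + mat_adjoint V * f C * V"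
    using hom B C V fB fC unfolding star_hom_on_def
    by (simp add: mult_add_distrib_mat add_mult_distrib_mat[of _ n N])
next
  fix c B assume B: "B \<in> A"
  show "mat_adjoint V * f (c \<cdot>\<^sub>m B) * V = c \<cdot>\<^sub>m (mat_adjoint V * f B * V)"
    using hom B V f_carrier[OF B] unfolding star_hom_on_def
    by (simp add: mult_smult_distrib mult_smult_assoc_mat[of _ n N])
next
  fix B assume B: "B \<in> A"
  show "mat_adjoint V * f (mat_adjoint B) * V = mat_adjoint (mat_adjoint V * f B * V)"
    using hom B V f_carrier[OF B] unfolding star_hom_on_def
    by (simp add: mat_adjoint_mult)
qed

lemma projection_fixes_if_adjoint_mult_eq:
  fixes P Y :: "'a :: conjugatable_ordered_field mat"
  assumes P: "P \<in> carrier_mat N N" and P_adjoint: "mat_adjoint P = P" and P_idem: "P * P = P"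
    and Y: "Y \<in> carrier_mat N n" and eq: "mat_adjoint Y * Y = mat_adjoint Y * (P * Y)"
  shows "P * Y = Y"
proof -
  define M where "M = Y - P * Y"
  have M: "M \<in> carrier_mat N n"
    unfolding M_def using P Y by (simp add: minus_carrier_mat)
  have "mat_adjoint M = mat_adjoint Y - mat_adjoint Y * P"
    unfolding M_def using P Y by (simp add: mat_adjoint_minus mat_adjoint_mult P_adjoint)
  then have "mat_adjoint M * M = mat_adjoint Y * M - mat_adjoint Y * (P * M)"
    using P Y M by (simp add: minus_mult_distrib_mat[of _ n N])
  also have "mat_adjoint Y * M = 0\<^sub>m n n"
    unfolding M_def using P Y by (simp add: mult_minus_distrib_mat eq)
  also have "P * M = 0\<^sub>m N n"
    unfolding M_def using P Y by (simp add: mult_minus_distrib_mat flip: assoc_mult_mat add: P_idem)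
  finally have "mat_adjoint M * M = 0\<^sub>m n n"
    using Y by simp
  with M have "M = 0\<^sub>m N n"
    by (rule mat_adjoint_mult_self_eq_0D)
  show ?thesis
  proof (rule eq_matI)
    fix i j assume "i < dim_row Y" "j < dim_col Y"
    with \<open>M = 0\<^sub>m N n\<close> Y have "(Y - P * Y) $$ (i, j) = 0"
      unfolding M_def by simp
    with \<open>i < dim_row Y\<close> \<open>j < dim_col Y\<close> P Y show "(P * Y) $$ (i, j) = Y $$ (i, j)"
      by simp
  qed (use P Y in simp_all)
qed

lemma range_invariant_if_compression_mult:
  fixes V X :: "'a :: conjugatable_ordered_field mat"
  assumes V: "V \<in> carrier_mat N n" and iso: "mat_adjoint V * V = 1\<^sub>m n"
    and X: "X \<in> carrier_mat N N"
    and mult: "mat_adjoint V * (mat_adjoint X * X) * V =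
      (mat_adjoint V * mat_adjoint X * V) * (mat_adjoint V * X * V)"
  shows "X * (V * mat_adjoint V) = V * mat_adjoint V * X * (V * mat_adjoint V)"
proof -
  let ?P = "V * mat_adjoint V"
  have "mat_adjoint (X * V) * (X * V) = mat_adjoint V * (mat_adjoint X * X) * V"
    using V X by (simp add: mat_adjoint_mult)
  also have "\<dots> = mat_adjoint (X * V) * (?P * (X * V))"
    unfolding mult using V X by (simp add: mat_adjoint_mult)
  finally have "mat_adjoint (X * V) * (X * V) = mat_adjoint (X * V) * (?P * (X * V))" .
  moreover have "?P \<in> carrier_mat N N" and "X * V \<in> carrier_mat N n"
    using V X by auto
  ultimately have "?P * (X * V) = X * V"
    using isometry_range_projection[OF V iso] by (metis projection_fixes_if_adjoint_mult_eq)
  then have "?P * (X * V) * mat_adjoint V = X * V * mat_adjoint V"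
    by simp
  then show ?thesis
    using V X by simp
qed

lemma commute_range_projection_if_star_hom_on_compression:
  assumes hom: "star_hom_on (carrier_mat d d) f"
    and f_carrier: "\<And>B. B \<in> carrier_mat d d \<Longrightarrow> f B \<in> carrier_mat N N"
    and V: "V \<in> carrier_mat N n" and iso: "mat_adjoint V * V = 1\<^sub>m n"
    and A: "A \<subseteq> carrier_mat d d" and A_adjoint: "\<And>B. B \<in> A \<Longrightarrow> mat_adjoint B \<in> A"
    and compression_hom: "star_hom_on A (\<lambda>B. mat_adjoint V * f B * V)"
    and B: "B \<in> A"
  shows "V * mat_adjoint V * f B = f B * (V * mat_adjoint V)"
proof -
  let ?P = "V * mat_adjoint V"
  have invariant: "f C * ?P = ?P * f C * ?P" if C: "C \<in> A" for C
  proof -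
    have "f (mat_adjoint C * C) = mat_adjoint (f C) * f C" and "f (mat_adjoint C) = mat_adjoint (f C)"
      using hom A C unfolding star_hom_on_def by auto
    moreover have "mat_adjoint V * f (mat_adjoint C * C) * V =
        (mat_adjoint V * f (mat_adjoint C) * V) * (mat_adjoint V * f C * V)"
      using compression_hom C A_adjoint[OF C] unfolding star_hom_on_def by blast
    ultimately show ?thesis
      using C A f_carrier by (intro range_invariant_if_compression_mult[OF V iso]) auto
  qed
  have fB: "f B \<in> carrier_mat N N"
    using A B f_carrier by blast
  have "f (mat_adjoint B) = mat_adjoint (f B)"
    using hom A B unfolding star_hom_on_def by auto
  then have adjoint_invariant: "mat_adjoint (f B) * ?P = ?P * mat_adjoint (f B) * ?P"
    using invariant[OF A_adjoint[OF B]] by simp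
  have "?P * f B = mat_adjoint (mat_adjoint (f B) * ?P)"
    using fB V by (simp add: mat_adjoint_mult)
  also have "\<dots> = mat_adjoint (?P * mat_adjoint (f B) * ?P)"
    unfolding adjoint_invariant ..
  also have "\<dots> = ?P * f B * ?P"
    using fB V by (simp add: mat_adjoint_mult)
  finally have "?P * f B = ?P * f B * ?P" .
  with invariant[OF B] show ?thesis
    by simp
qed

theorem mainTheorem7:
  fixes chi :: "complex mat" and n dL dR :: nat
  assumes "splitting_map chi n dL dR"
  shows "von_neumann_algebra dL (cons chi dL dR)
     \<and> star_hom_on (cons chi dL dR) (sigma chi dR)
     \<and> (\<forall>A. von_neumann_algebra dL A \<and> star_hom_on A (sigma chi dR) \<longrightarrow> A \<subseteq> cons chi dL dR)"
proof -
  let ?f = "\<lambda>B. kron B (1\<^sub>m dR)" and ?P = "chi * mat_adjoint chi"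
  have chi: "chi \<in> carrier_mat (dL * dR) n" and iso: "mat_adjoint chi * chi = 1\<^sub>m n"
    using assms unfolding splitting_map_def by blast+
  have hom: "star_hom_on (carrier_mat dL dL) ?f"
    by (rule star_hom_on_kron_one)
  have f_carrier: "?f B \<in> carrier_mat (dL * dR) (dL * dR)" if "B \<in> carrier_mat dL dL" for B
    using that by auto
  have cons_eq: "cons chi dL dR = {B \<in> carrier_mat dL dL. ?P * ?f B = ?f B * ?P}"
    unfolding cons_def proj_split_def ..
  have sigma_eq: "sigma chi dR = (\<lambda>B. mat_adjoint chi * ?f B * chi)"
    unfolding sigma_def ..
  have P: "?P \<in> carrier_mat (dL * dR) (dL * dR)"
    using chi by simp
  have "von_neumann_algebra dL (cons chi dL dR)"
    unfolding cons_eq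
    by (rule von_neumann_algebra_commutant_preimage[OF hom kron_one f_carrier P
          isometry_range_projection(1)[OF chi iso]])
  moreover have "star_hom_on (cons chi dL dR) (sigma chi dR)"
    unfolding sigma_eq cons_eq
    by (rule star_hom_on_compression[OF star_hom_on_subset[OF hom] _ chi iso]) (auto simp: f_carrier)
  moreover have "A \<subseteq> cons chi dL dR"
    if "von_neumann_algebra dL A" and "star_hom_on A (sigma chi dR)" for A
    using that commute_range_projection_if_star_hom_on_compression[OF hom f_carrier chi iso, of A]
    unfolding cons_eq sigma_eq von_neumann_algebra_def by blast
  ultimately show ?thesis
    by blast
qed

end
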